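(* Suppose that a pair $(\mathfrak m,\mathfrak m^* )$ of functions on the edges of the lattice strip is ICSH and has ICRBV. Then for every $y\in\mathbb Z$, $$\int_{\gamma_y}\big(\mathfrak m(z)\psi(z)\,dz+\mathfrak m^*(z)\psi^*(z)\,d\bar z\big)=\int_{\gamma_0}\big(\mathfrak m(z)\psi(z)\,dz+\mathfrak m^*(z)\psi^*(z)\,d\bar z\big).$$
   Context: Fix integers $a<0<b$, $C=\{a,\dots,b\}$, $C^*=\{a+\frac12,\dots,b-\frac12\}$. $\tilde V$ has orthonormal basis $(e_\rho)_{\rho\in\{\pm1\}^C}$. For $x'\in C^*$, $\varsigma_{x'}(\rho)$ flips the signs of $\rho_x$ for $x<x'$; $\psi_{x'}e_\rho=\frac{-\rho_{x'-1/2}+i\rho_{x'+1/2}}{\sqrt2}e_{\varsigma_{x'}(\rho)}$, $\psi^*_{x'}e_\rho=\frac{-i\rho_{x'-1/2}+\rho_{x'+1/2}}{\sqrt2}e_{\varsigma_{x'}(\rho)}$; $\mathrm{CliffGen}$ is their span. With $\beta=\frac12\log(\sqrt2+1)$: $T_h^{1/2}$ diagonal with entries $\exp(\frac\beta2\sum_{x=a}^{b-1}\rho_x\rho_{x+1})$, $e_\tau^\dagger T_ve_\rho=\exp(\beta\sum_{x=a}^b\rho_x\tau_x)\delta_{\tau_a\rho_a}\delta_{\tau_b\rho_b}$, $T=T_h^{1/2}T_vT_h^{1/2}$. The lattice strip: vertices $C\times\mathbb Z\subset\mathbb C$, nearest-neighbour edges $E$ identified with midpoints, faces with centres $p$; vertical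 edges $a+iy'$ / $b+iy'$ ($y'\in\mathbb Z+\frac12$) are left / right boundary edges. The fermions $\psi,\psi^*:E\to\mathrm{CliffGen}$ are the unique functions with $\psi(x'+iy)=T^{-y}\psi_{x'}T^y$, $\psi^*(x'+iy)=T^{-y}\psi^*_{x'}T^y$ on horizontal edges, such that for edges $z_1,z_2$ adjacent to a common vertex $v$ and face $p$, $\psi(z_1)+\frac{i|v-p|}{v-p}\psi^*(z_1)=\psi(z_2)+\frac{i|v-p|}{v-p}\psi^*(z_2)$, and $\psi(L)+i\psi^*(L)=0$, $\psi(R)-i\psi^*(R)=0$ on left/right boundary edges. For a contour $(w_0,\dots,w_m)$ with $z_j$ the edge joining $w_{j-1},w_j$: $\int(\mathfrak m\psi\,dz+\mathfrak m^*\psi^*\,d\bar z)=\sum_j(\mathfrak m(z_j)\psi(z_j)(w_j-w_{j-1})+\mathfrak m^*(z_j)\psi^*(z_j)\overline{(w_j-w_{j-1})})$. $\gamma_y=(a+iy,a+1+iy,\dots,b+iy)$. ICSH: for edges $z_1,z_2$ adjacent to a common vertex $v$ and face $p$, $\mathfrak m(z_1)-\frac{i|v-p|}{v-p}\mathfrak m^*(z_1)=\mathfrak m(z_2)-\frac{i|v-p|}{v-p}\mathfrak m^*(z_2)$. ICRBV: $\mathfrak m(L)-i\mathfrak m^*(L)=0$ and $\mathfrak m(R)+i\mathfrak m^*(R)=0$ on all left/right boundary edges $L,R$. *)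

theory Defs
  imports Complex_Main
begin

text \<open>A spin configuration rho in {+-1}^C, C = {a..b}, is represented by a function
  int => int with values +-1 on {a..b} and (normalised) value 1 outside.\<close>
definition cfgs :: "int \<Rightarrow> int \<Rightarrow> (int \<Rightarrow> int) set" where
  "cfgs a b = {\<rho>. (\<forall>x. a \<le> x \<and> x \<le> b \<longrightarrow> \<rho> x = 1 \<or> \<rho> x = -1)
                  \<and> (\<forall>x. \<not> (a \<le> x \<and> x \<le> b) \<longrightarrow> \<rho> x = 1)}"

text \<open>A linear operator M on V~ is given by its matrix: M tau rho = e_tau^dagger M e_rho
  (entries for non-configurations are meant to be 0).\<close>
type_synonym cop = "(int \<Rightarrow> int) \<Rightarrow> (int \<Rightarrow> int) \<Rightarrow> complex"

definition mmul :: "int \<Rightarrow> int \<Rightarrow> cop \<Rightarrow> cop \<Rightarrow> cop" where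
  "mmul a b M N = (\<lambda>\<tau> \<rho>. \<Sum>\<sigma>\<in>cfgs a b. M \<tau> \<sigma> * N \<sigma> \<rho>)"

definition mid :: "int \<Rightarrow> int \<Rightarrow> cop" where
  "mid a b = (\<lambda>\<tau> \<rho>. if \<rho> \<in> cfgs a b \<and> \<tau> = \<rho> then 1 else 0)"

primrec mpow :: "int \<Rightarrow> int \<Rightarrow> cop \<Rightarrow> nat \<Rightarrow> cop" where
  "mpow a b M 0 = mid a b"
| "mpow a b M (Suc n) = mmul a b M (mpow a b M n)"

definition minv :: "int \<Rightarrow> int \<Rightarrow> cop \<Rightarrow> cop" where
  "minv a b M = (THE N. (\<forall>\<tau> \<rho>. \<tau> \<notin> cfgs a b \<or> \<rho> \<notin> cfgs a b \<longrightarrow> N \<tau> \<rho> = 0)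
                     \<and> mmul a b M N = mid a b \<and> mmul a b N M = mid a b)"

definition mzpow :: "int \<Rightarrow> int \<Rightarrow> cop \<Rightarrow> int \<Rightarrow> cop" where
  "mzpow a b M y = (if 0 \<le> y then mpow a b M (nat y) else mpow a b (minv a b M) (nat (- y)))"

text \<open>varsigma_{x'} for x' = k + 1/2: flips rho_x for all x in C with x < x'.\<close>
definition flip :: "int \<Rightarrow> int \<Rightarrow> (int \<Rightarrow> int) \<Rightarrow> (int \<Rightarrow> int)" where
  "flip a k \<rho> = (\<lambda>x. if a \<le> x \<and> x \<le> k then - \<rho> x else \<rho> x)"

text \<open>psi_{x'} and psi*_{x'} for x' = k + 1/2.\<close>
definition psi_op :: "int \<Rightarrow> int \<Rightarrow> int \<Rightarrow> cop" where
  "psi_op a b k = (\<lambda>\<tau> \<rho>. if \<rho> \<in> cfgs a b \<and> \<tau> = flip a k \<rho>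
      then (- of_int (\<rho> k) + \<i> * of_int (\<rho> (k + 1))) / complex_of_real (sqrt 2) else 0)"

definition psis_op :: "int \<Rightarrow> int \<Rightarrow> int \<Rightarrow> cop" where
  "psis_op a b k = (\<lambda>\<tau> \<rho>. if \<rho> \<in> cfgs a b \<and> \<tau> = flip a k \<rho>
      then (- \<i> * of_int (\<rho> k) + of_int (\<rho> (k + 1))) / complex_of_real (sqrt 2) else 0)"

definition beta :: real where
  "beta = ln (sqrt 2 + 1) / 2"

definition Th_half :: "int \<Rightarrow> int \<Rightarrow> cop" where
  "Th_half a b = (\<lambda>\<tau> \<rho>. if \<rho> \<in> cfgs a b \<and> \<tau> = \<rho>
      then complex_of_real (exp (beta / 2 * (\<Sum>x\<in>{a..<b}. of_int (\<rho> x * \<rho> (x + 1))))) else 0)"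

definition Tv :: "int \<Rightarrow> int \<Rightarrow> cop" where
  "Tv a b = (\<lambda>\<tau> \<rho>. if \<rho> \<in> cfgs a b \<and> \<tau> \<in> cfgs a b \<and> \<tau> a = \<rho> a \<and> \<tau> b = \<rho> b
      then complex_of_real (exp (beta * (\<Sum>x\<in>{a..b}. of_int (\<rho> x * \<tau> x)))) else 0)"

definition Ttr :: "int \<Rightarrow> int \<Rightarrow> cop" where
  "Ttr a b = mmul a b (mmul a b (Th_half a b) (Tv a b)) (Th_half a b)"

section \<open>The lattice strip (points are complex numbers; edges = midpoints, faces = centres)\<close>

definition vertices :: "int \<Rightarrow> int \<Rightarrow> complex set" where
  "vertices a b = {Complex (of_int x) (of_int y) | x y. a \<le> x \<and> x \<le> b}"

definition hedges :: "int \<Rightarrow> int \<Rightarrow> complex set" where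
  "hedges a b = {Complex (of_int x + 1/2) (of_int y) | x y. a \<le> x \<and> x < b}"

definition vedges :: "int \<Rightarrow> int \<Rightarrow> complex set" where
  "vedges a b = {Complex (of_int x) (of_int y + 1/2) | x y. a \<le> x \<and> x \<le> b}"

definition edges :: "int \<Rightarrow> int \<Rightarrow> complex set" where
  "edges a b = hedges a b \<union> vedges a b"

definition faces :: "int \<Rightarrow> int \<Rightarrow> complex set" where
  "faces a b = {Complex (of_int x + 1/2) (of_int y + 1/2) | x y. a \<le> x \<and> x < b}"

definition adj :: "complex \<Rightarrow> complex \<Rightarrow> bool" where
  "adj z w \<longleftrightarrow> cmod (z - w) = 1/2"

definition corner :: "int \<Rightarrow> int \<Rightarrow> complex \<Rightarrow> complex \<Rightarrow> complex \<Rightarrow> complex \<Rightarrow> bool" where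
  "corner a b z1 z2 v p \<longleftrightarrow> z1 \<in> edges a b \<and> z2 \<in> edges a b \<and> v \<in> vertices a b \<and> p \<in> faces a b
     \<and> adj z1 v \<and> adj z2 v \<and> adj z1 p \<and> adj z2 p"

definition cfac :: "complex \<Rightarrow> complex \<Rightarrow> complex" where
  "cfac v p = \<i> * complex_of_real (cmod (v - p)) / (v - p)"

definition is_fermion :: "int \<Rightarrow> int \<Rightarrow> (complex \<Rightarrow> cop) \<Rightarrow> (complex \<Rightarrow> cop) \<Rightarrow> bool" where
  "is_fermion a b \<psi> \<psi>s \<longleftrightarrow>
     (\<forall>k y. a \<le> k \<and> k < b \<longrightarrow>
        \<psi> (Complex (of_int k + 1/2) (of_int y))
          = mmul a b (mmul a b (mzpow a b (Ttr a b) (- y)) (psi_op a b k)) (mzpow a b (Ttr a b) y)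
      \<and> \<psi>s (Complex (of_int k + 1/2) (of_int y))
          = mmul a b (mmul a b (mzpow a b (Ttr a b) (- y)) (psis_op a b k)) (mzpow a b (Ttr a b) y))
   \<and> (\<forall>z1 z2 v p. corner a b z1 z2 v p \<longrightarrow>
        (\<lambda>\<tau> \<rho>. \<psi> z1 \<tau> \<rho> + cfac v p * \<psi>s z1 \<tau> \<rho>) = (\<lambda>\<tau> \<rho>. \<psi> z2 \<tau> \<rho> + cfac v p * \<psi>s z2 \<tau> \<rho>))
   \<and> (\<forall>y::int. (\<lambda>\<tau> \<rho>. \<psi> (Complex (of_int a) (of_int y + 1/2)) \<tau> \<rho>
                     + \<i> * \<psi>s (Complex (of_int a) (of_int y + 1/2)) \<tau> \<rho>) = (\<lambda>\<tau> \<rho>. 0)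
             \<and> (\<lambda>\<tau> \<rho>. \<psi> (Complex (of_int b) (of_int y + 1/2)) \<tau> \<rho>
                     - \<i> * \<psi>s (Complex (of_int b) (of_int y + 1/2)) \<tau> \<rho>) = (\<lambda>\<tau> \<rho>. 0))"

definition ICSH :: "int \<Rightarrow> int \<Rightarrow> (complex \<Rightarrow> complex) \<Rightarrow> (complex \<Rightarrow> complex) \<Rightarrow> bool" where
  "ICSH a b m ms \<longleftrightarrow> (\<forall>z1 z2 v p. corner a b z1 z2 v p \<longrightarrow>
      m z1 - cfac v p * ms z1 = m z2 - cfac v p * ms z2)"

definition ICRBV :: "int \<Rightarrow> int \<Rightarrow> (complex \<Rightarrow> complex) \<Rightarrow> (complex \<Rightarrow> complex) \<Rightarrow> bool" where
  "ICRBV a b m ms \<longleftrightarrow> (\<forall>y::int.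
      m (Complex (of_int a) (of_int y + 1/2)) - \<i> * ms (Complex (of_int a) (of_int y + 1/2)) = 0
    \<and> m (Complex (of_int b) (of_int y + 1/2)) + \<i> * ms (Complex (of_int b) (of_int y + 1/2)) = 0)"

text \<open>Integral of m psi dz + m* psi* d(conj z) along the contour (w_0,...,w_m);
  z_j = (w_{j-1} + w_j)/2 is the edge joining w_{j-1} and w_j.\<close>
definition cint :: "(complex \<Rightarrow> complex) \<Rightarrow> (complex \<Rightarrow> complex) \<Rightarrow> (complex \<Rightarrow> cop) \<Rightarrow> (complex \<Rightarrow> cop)
                     \<Rightarrow> complex list \<Rightarrow> cop" where
  "cint m ms \<psi> \<psi>s ws = (\<lambda>\<tau> \<rho>. \<Sum>j\<in>{1..<length ws}.
      m ((ws ! (j - 1) + ws ! j) / 2) * \<psi> ((ws ! (j - 1) + ws ! j) / 2) \<tau> \<rho> * (ws ! j - ws ! (j - 1))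
    + ms ((ws ! (j - 1) + ws ! j) / 2) * \<psi>s ((ws ! (j - 1) + ws ! j) / 2) \<tau> \<rho> * cnj (ws ! j - ws ! (j - 1)))"

definition gamma :: "int \<Rightarrow> int \<Rightarrow> int \<Rightarrow> complex list" where
  "gamma a b y = map (\<lambda>x. Complex (of_int x) (of_int y)) [a..b]"

end

theory Submission
  imports Defs
begin

text \<open>The ICSH relations for \<open>(m, m*)\<close> and the corresponding relations for \<open>(\<psi>, \<psi>*)\<close> are dual
  to each other, and together they force the discrete integral of \<open>m \<psi> dz + m* \<psi>* d(conj z)\<close>
  around the boundary of every face to vanish. Summing over the row of faces between \<open>\<gamma>\<^sub>y\<close> and
  \<open>\<gamma>\<^sub>y\<^sub>+\<^sub>1\<close>, the interior vertical edges cancel, and the two vertical boundary edges contribute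
  nothing because the boundary conditions of \<open>\<psi>\<close> and of \<open>m\<close> annihilate the integrand there.
  Hence the integral along \<open>\<gamma>\<^sub>y\<close> does not depend on \<open>y\<close>.\<close>

abbreviation lattice_point :: "int \<Rightarrow> int \<Rightarrow> complex" where
  "lattice_point k y \<equiv> Complex (of_int k) (of_int y)"

abbreviation hedge_mid :: "int \<Rightarrow> int \<Rightarrow> complex" where
  "hedge_mid k y \<equiv> Complex (of_int k + 1/2) (of_int y)"

abbreviation vedge_mid :: "int \<Rightarrow> int \<Rightarrow> complex" where
  "vedge_mid k y \<equiv> Complex (of_int k) (of_int y + 1/2)"

abbreviation face_centre :: "int \<Rightarrow> int \<Rightarrow> complex" where
  "face_centre k y \<equiv> Complex (of_int k + 1/2) (of_int y + 1/2)"

definition edge_term ::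
    "(complex \<Rightarrow> complex) \<Rightarrow> (complex \<Rightarrow> complex) \<Rightarrow> (complex \<Rightarrow> complex) \<Rightarrow> (complex \<Rightarrow> complex)
      \<Rightarrow> complex \<Rightarrow> complex \<Rightarrow> complex" where
  "edge_term m ms f g z d = m z * f z * d + ms z * g z * cnj d"

lemma edge_term_uminus: "edge_term m ms f g z (- d) = - edge_term m ms f g z d"
  by (simp add: edge_term_def)

definition fermion_relations ::
    "int \<Rightarrow> int \<Rightarrow> (complex \<Rightarrow> complex) \<Rightarrow> (complex \<Rightarrow> complex) \<Rightarrow> bool" where
  "fermion_relations a b f g \<longleftrightarrow>
     (\<forall>z1 z2 v p. corner a b z1 z2 v p \<longrightarrow> f z1 + cfac v p * g z1 = f z2 + cfac v p * g z2)
   \<and> (\<forall>y. f (vedge_mid a y) + \<i> * g (vedge_mid a y) = 0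
        \<and> f (vedge_mid b y) - \<i> * g (vedge_mid b y) = 0)"

lemma is_fermion_relations:
  assumes "is_fermion a b \<psi> \<psi>s"
  shows "fermion_relations a b (\<lambda>z. \<psi> z \<tau> \<rho>) (\<lambda>z. \<psi>s z \<tau> \<rho>)"
  using assms unfolding is_fermion_def fermion_relations_def by metis

lemma sum_int_telescope:
  fixes f :: "int \<Rightarrow> 'a::ab_group_add"
  assumes "a \<le> b"
  shows "(\<Sum>k\<in>{a..<b}. f k - f (k + 1)) = f a - f b"
  using assms
proof (induction b rule: int_ge_induct)
  case (step b)
  then have "{a..<b + 1} = insert b {a..<b}" by auto
  with step show ?case by simp
qed simp

lemma cint_gamma_eq_sum:
  assumes "a \<le> b"
  shows "cint m ms \<psi> \<psi>s (gamma a b y) \<tau> \<rho>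
       = (\<Sum>k\<in>{a..<b}. edge_term m ms (\<lambda>z. \<psi> z \<tau> \<rho>) (\<lambda>z. \<psi>s z \<tau> \<rho>) (hedge_mid k y) 1)"
proof -
  define ws where "ws = gamma a b y"
  have len: "length ws = nat (b - a + 1)"
    unfolding ws_def gamma_def by simp
  have nth: "ws ! j = lattice_point (a + int j) y" if "j < nat (b - a + 1)" for j
    using that unfolding ws_def gamma_def by simp
  have "cint m ms \<psi> \<psi>s ws \<tau> \<rho>
      = (\<Sum>j\<in>{1..<nat (b - a + 1)}.
           edge_term m ms (\<lambda>z. \<psi> z \<tau> \<rho>) (\<lambda>z. \<psi>s z \<tau> \<rho>) (hedge_mid (a + int j - 1) y) 1)"
    unfolding cint_def len
  proof (rule sum.cong)
    fix j assume j: "j \<in> {1..<nat (b - a + 1)}"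
    then have "ws ! (j - 1) = lattice_point (a + int j - 1) y" "ws ! j = lattice_point (a + int j) y"
      using nth by (auto simp: of_nat_diff)
    then have "(ws ! (j - 1) + ws ! j) / 2 = hedge_mid (a + int j - 1) y"
      and "ws ! j - ws ! (j - 1) = 1"
      by (simp_all add: complex_eq_iff)
    then show "m ((ws ! (j - 1) + ws ! j) / 2) * \<psi> ((ws ! (j - 1) + ws ! j) / 2) \<tau> \<rho> * (ws ! j - ws ! (j - 1))
        + ms ((ws ! (j - 1) + ws ! j) / 2) * \<psi>s ((ws ! (j - 1) + ws ! j) / 2) \<tau> \<rho> * cnj (ws ! j - ws ! (j - 1))
      = edge_term m ms (\<lambda>z. \<psi> z \<tau> \<rho>) (\<lambda>z. \<psi>s z \<tau> \<rho>) (hedge_mid (a + int j - 1) y) 1"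
      by (simp add: edge_term_def)
  qed simp
  also have "\<dots> = (\<Sum>k\<in>{a..<b}. edge_term m ms (\<lambda>z. \<psi> z \<tau> \<rho>) (\<lambda>z. \<psi>s z \<tau> \<rho>) (hedge_mid k y) 1)"
    by (rule sum.reindex_bij_witness[where i="\<lambda>k. nat (k - a + 1)" and j="\<lambda>j. a + int j - 1"])
       (use assms in auto)
  finally show ?thesis unfolding ws_def .
qed

lemma cfac_diagonal:
  assumes "v - p = Complex (s/2) (t/2)" and "s \<in> {-1, 1}" and "t \<in> {-1, 1}"
  shows "cfac v p = of_real (sqrt 2 / 2) * Complex t s"
proof -
  have "sqrt (1/2) = sqrt 2 / 2"
    by (rule real_sqrt_unique) (auto simp: power_divide)
  then have norm: "cmod (v - p) = sqrt 2 / 2"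
    using assms by (auto simp: cmod_def power2_eq_square)
  have "(v - p) * Complex t s = \<i>" and "v - p \<noteq> 0"
    using assms by (auto simp: complex_eq_iff)
  then have inverse: "\<i> / (v - p) = Complex t s"
    by (simp add: divide_eq_eq mult.commute)
  have "cfac v p = of_real (cmod (v - p)) * (\<i> / (v - p))"
    unfolding cfac_def by simp
  then show ?thesis
    unfolding norm inverse .
qed

lemma cfac_face_corners:
  fixes k y :: int
  defines "u \<equiv> complex_of_real (sqrt 2 / 2)"
  shows "cfac (lattice_point k y) (face_centre k y) = - (1 + \<i>) * u"
    and "cfac (lattice_point (k + 1) y) (face_centre k y) = - (1 - \<i>) * u"
    and "cfac (lattice_point (k + 1) (y + 1)) (face_centre k y) = (1 + \<i>) * u"
    and "cfac (lattice_point k (y + 1)) (face_centre k y) = (1 - \<i>) * u"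
  unfolding u_def
  by (subst cfac_diagonal[where s="-1" and t="-1"] cfac_diagonal[where s="1" and t="-1"]
        cfac_diagonal[where s="1" and t="1"] cfac_diagonal[where s="-1" and t="1"];
      simp add: complex_eq_iff)+

lemma corners_around_face:
  assumes "a \<le> k" and "k < b"
  shows "corner a b (hedge_mid k y) (vedge_mid k y) (lattice_point k y) (face_centre k y)"
    and "corner a b (hedge_mid k y) (vedge_mid (k + 1) y) (lattice_point (k + 1) y) (face_centre k y)"
    and "corner a b (hedge_mid k (y + 1)) (vedge_mid (k + 1) y) (lattice_point (k + 1) (y + 1))
           (face_centre k y)"
    and "corner a b (hedge_mid k (y + 1)) (vedge_mid k y) (lattice_point k (y + 1)) (face_centre k y)"
proof -
  have "sqrt (1/4) = 1/2"
    by (rule real_sqrt_unique) (auto simp: power_divide)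
  note adj = this adj_def cmod_def power2_eq_square
  have h: "hedge_mid x y' \<in> edges a b" and fc: "face_centre x y' \<in> faces a b"
    if "a \<le> x" "x < b" for x y'
    using that unfolding edges_def hedges_def faces_def by blast+
  have v: "vedge_mid x y' \<in> edges a b" and vt: "lattice_point x y' \<in> vertices a b"
    if "a \<le> x" "x \<le> b" for x y'
    using that unfolding edges_def vedges_def vertices_def by blast+
  show "corner a b (hedge_mid k y) (vedge_mid k y) (lattice_point k y) (face_centre k y)"
    and "corner a b (hedge_mid k y) (vedge_mid (k + 1) y) (lattice_point (k + 1) y) (face_centre k y)"
    and "corner a b (hedge_mid k (y + 1)) (vedge_mid (k + 1) y) (lattice_point (k + 1) (y + 1))
           (face_centre k y)"
    and "corner a b (hedge_mid k (y + 1)) (vedge_mid k y) (lattice_point k (y + 1)) (face_centre k y)"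
    unfolding corner_def by (insert assms; intro conjI h v vt fc; simp add: adj)+
qed

text \<open>\<open>p, q\<close> stand for \<open>\<psi>, \<psi>*\<close> and \<open>m, n\<close> for \<open>m, m*\<close> on the bottom, right, top and left edge
  of a face; the hypotheses are its eight corner relations, with \<open>cfac = \<plusminus>(1 \<plusminus> j) u\<close>, \<open>u = 1/\<surd>2\<close>.\<close>
lemma face_relations_cancel:
  fixes u j pB qB pR qR pT qT pL qL mB nB mR nR mT nT mL nL :: "'a::field_char_0"
  assumes "2 * u * u = 1" and "j * j = -1"
    and "pB + (- (1 + j) * u) * qB = pL + (- (1 + j) * u) * qL"
    and "pB + (- (1 - j) * u) * qB = pR + (- (1 - j) * u) * qR"
    and "pT + ((1 + j) * u) * qT = pR + ((1 + j) * u) * qR"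
    and "pT + ((1 - j) * u) * qT = pL + ((1 - j) * u) * qL"
    and "mB - (- (1 + j) * u) * nB = mL - (- (1 + j) * u) * nL"
    and "mB - (- (1 - j) * u) * nB = mR - (- (1 - j) * u) * nR"
    and "mT - ((1 + j) * u) * nT = mR - ((1 + j) * u) * nR"
    and "mT - ((1 - j) * u) * nT = mL - ((1 - j) * u) * nL"
  shows "(mB * pB + nB * qB) + j * (mR * pR - nR * qR) - (mT * pT + nT * qT) - j * (mL * pL - nL * qL) = 0"
  using assms by algebra

lemma face_boundary_integral_zero:
  assumes rel: "fermion_relations a b f g" and icsh: "ICSH a b m ms"
    and k: "a \<le> k" "k < b"
  shows "edge_term m ms f g (hedge_mid k y) 1 + edge_term m ms f g (vedge_mid (k + 1) y) \<i>
       + edge_term m ms f g (hedge_mid k (y + 1)) (- 1) + edge_term m ms f g (vedge_mid k y) (- \<i>) = 0"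
proof -
  note corners = corners_around_face[OF k, of y]
  have f: "f z1 + cfac v p * g z1 = f z2 + cfac v p * g z2"
    and m: "m z1 - cfac v p * ms z1 = m z2 - cfac v p * ms z2"
    if "corner a b z1 z2 v p" for z1 z2 v p
    using that rel icsh unfolding fermion_relations_def ICSH_def by blast+
  note relations = f[OF corners(1)] f[OF corners(2)] f[OF corners(3)] f[OF corners(4)]
    m[OF corners(1)] m[OF corners(2)] m[OF corners(3)] m[OF corners(4)]
  have "2 * complex_of_real (sqrt 2 / 2) * complex_of_real (sqrt 2 / 2) = 1"
    by (simp flip: of_real_mult)
  from face_relations_cancel[OF this _ relations[unfolded cfac_face_corners]]
  show ?thesis
    by (simp add: edge_term_def algebra_simps)
qed

lemma vertical_boundary_edge_terms_zero:
  assumes "fermion_relations a b f g" and "ICRBV a b m ms"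
  shows "edge_term m ms f g (vedge_mid a y) \<i> = 0" and "edge_term m ms f g (vedge_mid b y) \<i> = 0"
proof -
  from assms have "f (vedge_mid a y) = - \<i> * g (vedge_mid a y)" "f (vedge_mid b y) = \<i> * g (vedge_mid b y)"
    and "m (vedge_mid a y) = \<i> * ms (vedge_mid a y)" "m (vedge_mid b y) = - \<i> * ms (vedge_mid b y)"
    unfolding fermion_relations_def ICRBV_def by (simp_all add: eq_neg_iff_add_eq_0)
  then show "edge_term m ms f g (vedge_mid a y) \<i> = 0" and "edge_term m ms f g (vedge_mid b y) \<i> = 0"
    by (simp_all add: edge_term_def algebra_simps)
qed

lemma row_integral_shift:
  assumes "a \<le> b" and rel: "fermion_relations a b f g"
    and icsh: "ICSH a b m ms" and icrbv: "ICRBV a b m ms"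
  shows "(\<Sum>k\<in>{a..<b}. edge_term m ms f g (hedge_mid k (y + 1)) 1)
       = (\<Sum>k\<in>{a..<b}. edge_term m ms f g (hedge_mid k y) 1)"
proof -
  let ?H = "\<lambda>y' k. edge_term m ms f g (hedge_mid k y') 1"
  let ?V = "\<lambda>k. edge_term m ms f g (vedge_mid k y) \<i>"
  have "(\<Sum>k\<in>{a..<b}. ?H y k) - (\<Sum>k\<in>{a..<b}. ?H (y + 1) k) = (\<Sum>k\<in>{a..<b}. ?V k - ?V (k + 1))"
    unfolding sum_subtractf[symmetric]
  proof (rule sum.cong)
    fix k assume "k \<in> {a..<b}"
    with face_boundary_integral_zero[OF rel icsh, of k y]
    show "?H y k - ?H (y + 1) k = ?V k - ?V (k + 1)"
      by (simp add: edge_term_uminus algebra_simps)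
  qed simp
  also have "\<dots> = ?V a - ?V b"
    using \<open>a \<le> b\<close> by (rule sum_int_telescope)
  also have "\<dots> = 0"
    using vertical_boundary_edge_terms_zero[OF rel icrbv] by simp
  finally show ?thesis by simp
qed

theorem proposition3p13:
  fixes a b y :: int and m ms :: "complex \<Rightarrow> complex" and \<psi> \<psi>s :: "complex \<Rightarrow> cop"
  assumes "a < 0" and "0 < b"
    and "is_fermion a b \<psi> \<psi>s"
    and "ICSH a b m ms" and "ICRBV a b m ms"
  shows "cint m ms \<psi> \<psi>s (gamma a b y) = cint m ms \<psi> \<psi>s (gamma a b 0)"
proof (intro ext)
  fix \<tau> \<rho>
  have ab: "a \<le> b" using assms(1,2) by simp
  define row where
    "row y = cint m ms \<psi> \<psi>s (gamma a b y) \<tau> \<rho>" for y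
  have shift: "row (y + 1) = row y" for y
    unfolding row_def cint_gamma_eq_sum[OF ab]
    using row_integral_shift[OF ab is_fermion_relations[OF assms(3)] assms(4,5)] .
  have "row y = row 0"
  proof (induction y rule: int_induct[where k=0])
    case (step1 i)
    then show ?case using shift[of i] by simp
  next
    case (step2 i)
    then show ?case using shift[of "i - 1"] by simp
  qed simp
  then show "cint m ms \<psi> \<psi>s (gamma a b y) \<tau> \<rho> = cint m ms \<psi> \<psi>s (gamma a b 0) \<tau> \<rho>"
    unfolding row_def .
qed

end
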